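(* Let $G=(V,E)$ be an $n$-vertex graph and $\pi\colon[n]\to V$ a fixed bijection. If the longest dependency path with respect to $\pi$ has length $2l+1$ (with $l\ge 0$), then the parallel greedy MIS algorithm run on $G$ with the order $\pi$ terminates within at most $l+1$ rounds.
   Context: Parallel greedy MIS with a fixed order $\pi\colon[n]\to V$ (a bijection; $\pi(i)$ is the vertex at position $i$): in each round, every remaining vertex whose position is smaller than the positions of all its remaining neighbors is added to the independent set, and these vertices together with all their neighbors are removed; rounds are counted until no vertex remains. Let $V^*\subseteq V$ be the MIS produced by the sequential greedy algorithm that processes $\pi(1),\dots,\pi(n)$ in this order and adds a vertex iff none of its neighbors was added before. For $v\notin V^*$, its inhibitor $\mathrm{inhib}(v)$ is the neighbor of $v$ in $V^*$ with minimum position. A sequence of positions $1\le p_1<\dots<p_{2l+1}\le n$ ($l\ge 0$) forms a dependency path of length $2l+1$ (with respect to $\pi$) if (i) $(\pi(p_1),\dots,\pi(p_{2l+1}))$ is a path in $G$; (ii) $\pi(p_k)\in V^*$ for all odd $k$; (iii) $\pi(p_k)\notin V^*$ for all even $k$; (iv) $\pi(p_{k-1})=\mathrm{inhib}(\pi(p_k))$ for all even $k$. The dependency length is the maximum length of a dependency path. *)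

theory Defs
  imports Main
begin

definition simple_graph :: "'a set \<Rightarrow> ('a \<Rightarrow> 'a \<Rightarrow> bool) \<Rightarrow> bool" where
  "simple_graph V E \<longleftrightarrow> finite V \<and> (\<forall>u v. E u v \<longrightarrow> u \<in> V \<and> v \<in> V)
     \<and> (\<forall>u v. E u v \<longrightarrow> E v u) \<and> (\<forall>v. \<not> E v v)"

fun seq_greedy :: "(nat \<Rightarrow> 'a) \<Rightarrow> ('a \<Rightarrow> 'a \<Rightarrow> bool) \<Rightarrow> nat \<Rightarrow> 'a set" where
  "seq_greedy \<pi> E 0 = {}"
| "seq_greedy \<pi> E (Suc k) =
     (if (\<exists>u\<in>seq_greedy \<pi> E k. E u (\<pi> (Suc k))) then seq_greedy \<pi> E k
      else insert (\<pi> (Suc k)) (seq_greedy \<pi> E k))"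

definition greedy_mis :: "nat \<Rightarrow> (nat \<Rightarrow> 'a) \<Rightarrow> ('a \<Rightarrow> 'a \<Rightarrow> bool) \<Rightarrow> 'a set" where
  "greedy_mis n \<pi> E = seq_greedy \<pi> E n"

definition inhib :: "nat \<Rightarrow> (nat \<Rightarrow> 'a) \<Rightarrow> ('a \<Rightarrow> 'a \<Rightarrow> bool) \<Rightarrow> 'a \<Rightarrow> 'a" where
  "inhib n \<pi> E v = \<pi> (LEAST i. i \<in> {1..n} \<and> \<pi> i \<in> greedy_mis n \<pi> E \<and> E (\<pi> i) v)"

text \<open>A dependency path, given as the list of positions [p_1, ..., p_{2l+1}]
  (list index j corresponds to p_{j+1}).\<close>
definition dep_path :: "nat \<Rightarrow> (nat \<Rightarrow> 'a) \<Rightarrow> ('a \<Rightarrow> 'a \<Rightarrow> bool) \<Rightarrow> nat list \<Rightarrow> bool" where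
  "dep_path n \<pi> E ps \<longleftrightarrow>
     odd (length ps) \<and> set ps \<subseteq> {1..n} \<and> sorted_wrt (<) ps
   \<and> (\<forall>j. Suc j < length ps \<longrightarrow> E (\<pi> (ps ! j)) (\<pi> (ps ! Suc j)))
   \<and> (\<forall>j < length ps. even j \<longrightarrow> \<pi> (ps ! j) \<in> greedy_mis n \<pi> E)
   \<and> (\<forall>j < length ps. odd j \<longrightarrow> \<pi> (ps ! j) \<notin> greedy_mis n \<pi> E
        \<and> \<pi> (ps ! (j - 1)) = inhib n \<pi> E (\<pi> (ps ! j)))"

definition par_selected :: "nat \<Rightarrow> (nat \<Rightarrow> 'a) \<Rightarrow> ('a \<Rightarrow> 'a \<Rightarrow> bool) \<Rightarrow> 'a set \<Rightarrow> 'a set" where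
  "par_selected n \<pi> E R = {\<pi> i | i. i \<in> {1..n} \<and> \<pi> i \<in> R \<and>
      (\<forall>j\<in>{1..n}. \<pi> j \<in> R \<and> E (\<pi> i) (\<pi> j) \<longrightarrow> i < j)}"

definition par_round :: "nat \<Rightarrow> (nat \<Rightarrow> 'a) \<Rightarrow> ('a \<Rightarrow> 'a \<Rightarrow> bool) \<Rightarrow> 'a set \<Rightarrow> 'a set" where
  "par_round n \<pi> E R = R - (par_selected n \<pi> E R \<union>
      {u \<in> R. \<exists>v \<in> par_selected n \<pi> E R. E v u})"

definition remaining :: "nat \<Rightarrow> (nat \<Rightarrow> 'a) \<Rightarrow> ('a \<Rightarrow> 'a \<Rightarrow> bool) \<Rightarrow> 'a set \<Rightarrow> nat \<Rightarrow> 'a set" where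
  "remaining n \<pi> E V k = (par_round n \<pi> E ^^ k) V"

end

theory Submission
  imports Defs
begin

(* Once a vertex of the greedy MIS V* has left the parallel process, so have all its neighbours:
   a vertex of V* can only leave by being selected, never as the neighbour of a selected vertex s,
   because s would then lie outside V* and its earlier neighbour in V* would have to be gone
   already, taking s with it.
   Hence a vertex p of V* that survives round k+1 is blocked by a smaller neighbour j outside V*
   that is still present, and the inhibitor i of j survives round k.  Appending j, p to a
   dependency path ending at i yields one ending at p, so by induction on k a vertex of V* whose
   dependency paths have length at most 2k+1 is gone after k+1 rounds.  Every vertex outside V*
   is gone together with its neighbours in V*. *)

lemma sorted_wrt_less_le_last:
  "sorted_wrt (<) xs \<Longrightarrow> x \<in> set xs \<Longrightarrow> x \<le> (last xs :: nat)"
  by (induction xs) (auto simp: less_imp_le)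

lemma dep_path_append_pair:
  assumes path: "dep_path n \<pi> E ps" and "last ps = i"
    and "i < j" "j < p" "j \<in> {1..n}" "p \<in> {1..n}"
    and "E (\<pi> i) (\<pi> j)" "E (\<pi> j) (\<pi> p)"
    and "\<pi> j \<notin> greedy_mis n \<pi> E" "\<pi> p \<in> greedy_mis n \<pi> E"
    and "inhib n \<pi> E (\<pi> j) = \<pi> i"
  shows "dep_path n \<pi> E (ps @ [j, p])"
proof -
  obtain m where m: "length ps = Suc m"
    using path by (cases ps) (auto simp: dep_path_def)
  have "ps \<noteq> []"
    using m by auto
  then have "ps ! m = i"
    using \<open>last ps = i\<close> m by (simp add: last_conv_nth)
  moreover have "\<forall>x \<in> set ps. x \<le> i"
    using path \<open>last ps = i\<close> sorted_wrt_less_le_last by (auto simp: dep_path_def)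
  moreover have "(ps @ [j, p]) ! t = ps ! t" if "t \<le> m" for t
    using that m by (simp add: nth_append)
  moreover have "(ps @ [j, p]) ! Suc m = j" "(ps @ [j, p]) ! Suc (Suc m) = p"
    using m by (simp_all add: nth_append)
  ultimately show ?thesis
    using path assms m unfolding dep_path_def
    by (auto simp: sorted_wrt_append less_Suc_eq)
qed

lemma dep_path_singleton: "i \<in> {1..n} \<Longrightarrow> \<pi> i \<in> greedy_mis n \<pi> E \<Longrightarrow> dep_path n \<pi> E [i]"
  by (simp add: dep_path_def)

lemma remaining_Suc:
  "remaining n \<pi> E V (Suc k) = par_round n \<pi> E (remaining n \<pi> E V k)"
  by (simp add: remaining_def)

lemma remaining_subset: "remaining n \<pi> E V k \<subseteq> V"
  by (induction k) (auto simp: remaining_def par_round_def)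

locale vertex_order =
  fixes n :: nat and \<pi> :: "nat \<Rightarrow> 'a" and E :: "'a \<Rightarrow> 'a \<Rightarrow> bool"
  assumes inj_order: "inj_on \<pi> {1..n}"
begin

abbreviation mis :: "'a set" where
  "mis \<equiv> greedy_mis n \<pi> E"

lemma seq_greedy_subset: "seq_greedy \<pi> E k \<subseteq> \<pi> ` {1..k}"
  by (induction k) auto

lemma seq_greedy_prefix:
  "k \<le> m \<Longrightarrow> m \<le> n \<Longrightarrow> seq_greedy \<pi> E m \<inter> \<pi> ` {1..k} = seq_greedy \<pi> E k"
proof (induction m)
  case 0
  then show ?case by simp
next
  case (Suc m)
  show ?case
  proof (cases "k = Suc m")
    case True
    then show ?thesis using seq_greedy_subset by blast
  next
    case False
    with Suc have "seq_greedy \<pi> E m \<inter> \<pi> ` {1..k} = seq_greedy \<pi> E k" by simp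
    moreover have "\<pi> (Suc m) \<notin> \<pi> ` {1..k}"
      using False Suc.prems inj_on_image_mem_iff[OF inj_order, of "Suc m" "{1..k}"] by auto
    ultimately show ?thesis by auto
  qed
qed

lemma greedy_mis_subset: "mis \<subseteq> \<pi> ` {1..n}"
  unfolding greedy_mis_def using seq_greedy_subset by blast

lemma greedy_mis_iff:
  assumes "p \<in> {1..n}"
  shows "\<pi> p \<in> mis \<longleftrightarrow> \<not> (\<exists>i \<in> {1..<p}. \<pi> i \<in> mis \<and> E (\<pi> i) (\<pi> p))"
proof -
  obtain q where p: "p = Suc q" using assms by (cases p) auto
  have earlier: "seq_greedy \<pi> E q = mis \<inter> \<pi> ` {1..<p}"
    using seq_greedy_prefix[of q n] assms p
    by (simp add: greedy_mis_def atLeastLessThanSuc_atLeastAtMost)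
  have "\<pi> p \<notin> seq_greedy \<pi> E q"
    using seq_greedy_subset inj_on_image_mem_iff[OF inj_order, of p "{1..q}"] assms p by auto
  then have "\<pi> p \<in> seq_greedy \<pi> E p \<longleftrightarrow> \<not> (\<exists>u \<in> seq_greedy \<pi> E q. E u (\<pi> p))"
    using p by simp
  also have "\<dots> \<longleftrightarrow> \<not> (\<exists>i \<in> {1..<p}. \<pi> i \<in> mis \<and> E (\<pi> i) (\<pi> p))"
    unfolding earlier by blast
  finally show ?thesis
    using seq_greedy_prefix[of p n] assms unfolding greedy_mis_def by auto
qed

lemma obtain_inhib:
  assumes "j \<in> {1..n}" "\<pi> j \<notin> mis"
  obtains i where "i \<in> {1..<j}" "\<pi> i \<in> mis" "E (\<pi> i) (\<pi> j)" "inhib n \<pi> E (\<pi> j) = \<pi> i"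
proof -
  let ?inhibits = "\<lambda>i. i \<in> {1..n} \<and> \<pi> i \<in> mis \<and> E (\<pi> i) (\<pi> j)"
  obtain i where i: "i \<in> {1..<j}" "\<pi> i \<in> mis" "E (\<pi> i) (\<pi> j)"
    using greedy_mis_iff assms by blast
  then have "?inhibits i" using assms by auto
  then have "?inhibits (Least ?inhibits)" "Least ?inhibits \<le> i"
    by (rule LeastI, rule Least_le)
  moreover have "inhib n \<pi> E (\<pi> j) = \<pi> (Least ?inhibits)"
    by (simp only: inhib_def)
  ultimately show ?thesis
    using i by (intro that[of "Least ?inhibits"]) auto
qed

end

locale graph_vertex_order = vertex_order +
  fixes V :: "'a set"
  assumes edge_sym: "E u v \<Longrightarrow> E v u"
    and edge_irrefl: "\<not> E v v"
    and order_onto: "\<pi> ` {1..n} = V"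
begin

lemma greedy_mis_independent: "u \<in> mis \<Longrightarrow> w \<in> mis \<Longrightarrow> \<not> E u w"
proof
  assume "u \<in> mis" "w \<in> mis" "E u w"
  moreover obtain p q where "p \<in> {1..n}" "u = \<pi> p" "q \<in> {1..n}" "w = \<pi> q"
    using greedy_mis_subset \<open>u \<in> mis\<close> \<open>w \<in> mis\<close> by blast
  moreover have "p \<noteq> q" using calculation edge_irrefl by auto
  ultimately consider "p \<in> {1..<q}" | "q \<in> {1..<p}" by fastforce
  then show False
    using greedy_mis_iff \<open>p \<in> {1..n}\<close> \<open>q \<in> {1..n}\<close> \<open>u \<in> mis\<close> \<open>w \<in> mis\<close> \<open>E u w\<close> \<open>u = \<pi> p\<close> \<open>w = \<pi> q\<close> edge_sym
    by cases blast+
qed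

lemma par_round_removes_mis_neighbours:
  assumes closed: "\<And>v w. v \<in> mis \<Longrightarrow> v \<notin> R \<Longrightarrow> E v w \<Longrightarrow> w \<notin> R"
    and "v \<in> mis" "v \<notin> par_round n \<pi> E R" "E v w"
  shows "w \<notin> par_round n \<pi> E R"
proof -
  let ?S = "par_selected n \<pi> E R"
  have "\<not> (\<exists>s \<in> ?S. E s v)"
  proof
    assume "\<exists>s \<in> ?S. E s v"
    then obtain s where "s \<in> ?S" "E s v" by blast
    then obtain i where s: "s = \<pi> i" "i \<in> {1..n}" "\<pi> i \<in> R"
      and first: "\<forall>j \<in> {1..n}. \<pi> j \<in> R \<and> E (\<pi> i) (\<pi> j) \<longrightarrow> i < j"
      unfolding par_selected_def by blast
    have "s \<notin> mis" using greedy_mis_independent \<open>v \<in> mis\<close> \<open>E s v\<close> by blast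
    then obtain a where "a \<in> {1..<i}" "\<pi> a \<in> mis" "E (\<pi> a) s"
      using obtain_inhib s by metis
    moreover have "\<pi> a \<notin> R"
    proof
      assume "\<pi> a \<in> R"
      then have "i < a"
        using first edge_sym[OF \<open>E (\<pi> a) s\<close>] s(1) \<open>a \<in> {1..<i}\<close> s(2) by auto
      then show False using \<open>a \<in> {1..<i}\<close> by simp
    qed
    ultimately show False
      using closed s by blast
  qed
  then show ?thesis
    using assms unfolding par_round_def by blast
qed

lemma remaining_removes_mis_neighbours:
  "v \<in> mis \<Longrightarrow> v \<notin> remaining n \<pi> E V k \<Longrightarrow> E v w \<Longrightarrow> w \<notin> remaining n \<pi> E V k"
proof (induction k arbitrary: v w)
  case 0
  then show ?case
    using greedy_mis_subset order_onto by (auto simp: remaining_def)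
next
  case (Suc k)
  then show ?case
    using par_round_removes_mis_neighbours by (simp add: remaining_Suc)
qed

lemma surviving_mis_vertex_extends_dep_paths:
  assumes p: "p \<in> {1..n}" "\<pi> p \<in> mis" and survives: "\<pi> p \<in> remaining n \<pi> E V (Suc k)"
  obtains i j where "i \<in> {1..n}" "\<pi> i \<in> mis" "\<pi> i \<in> remaining n \<pi> E V k"
    and "\<And>ps. dep_path n \<pi> E ps \<Longrightarrow> last ps = i \<Longrightarrow> dep_path n \<pi> E (ps @ [j, p])"
proof -
  let ?R = "remaining n \<pi> E V k"
  have "\<pi> p \<in> ?R" "\<pi> p \<notin> par_selected n \<pi> E ?R"
    using survives unfolding remaining_Suc par_round_def by auto
  then obtain j where j: "j \<in> {1..n}" "\<pi> j \<in> ?R" "E (\<pi> p) (\<pi> j)" "\<not> p < j"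
    using p unfolding par_selected_def by blast
  then have "j < p" using edge_irrefl by (cases "j = p") auto
  have "\<pi> j \<notin> mis" using greedy_mis_independent p j by blast
  then obtain i where i: "i \<in> {1..<j}" "\<pi> i \<in> mis" "E (\<pi> i) (\<pi> j)" "inhib n \<pi> E (\<pi> j) = \<pi> i"
    using obtain_inhib j by metis
  have "\<pi> i \<in> ?R"
    using remaining_removes_mis_neighbours i j by blast
  moreover have "dep_path n \<pi> E (ps @ [j, p])" if "dep_path n \<pi> E ps" "last ps = i" for ps
    using dep_path_append_pair[OF that] i j p \<open>j < p\<close> \<open>\<pi> j \<notin> mis\<close> edge_sym by auto
  ultimately show ?thesis
    using i j by (intro that[of i j]) auto
qed

lemma mis_vertex_removed_within_dep_length:
  assumes "p \<in> {1..n}" "\<pi> p \<in> mis"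
    and "\<forall>ps. dep_path n \<pi> E ps \<and> last ps = p \<longrightarrow> length ps \<le> 2 * k + 1"
  shows "\<pi> p \<notin> remaining n \<pi> E V (Suc k)"
  using assms
proof (induction k arbitrary: p)
  case 0
  show ?case
  proof
    assume "\<pi> p \<in> remaining n \<pi> E V (Suc 0)"
    then obtain i j where "i \<in> {1..n}" "\<pi> i \<in> mis"
      and extend: "\<And>ps. dep_path n \<pi> E ps \<Longrightarrow> last ps = i \<Longrightarrow> dep_path n \<pi> E (ps @ [j, p])"
      using surviving_mis_vertex_extends_dep_paths[OF "0.prems"(1,2)] by blast
    then have "dep_path n \<pi> E [i, j, p]"
      using extend[OF dep_path_singleton] by simp
    then show False
      using "0.prems"(3) by auto
  qed
next
  case (Suc k)
  show ?case
  proof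
    assume "\<pi> p \<in> remaining n \<pi> E V (Suc (Suc k))"
    then obtain i j where i: "i \<in> {1..n}" "\<pi> i \<in> mis" "\<pi> i \<in> remaining n \<pi> E V (Suc k)"
      and extend: "\<And>ps. dep_path n \<pi> E ps \<Longrightarrow> last ps = i \<Longrightarrow> dep_path n \<pi> E (ps @ [j, p])"
      using surviving_mis_vertex_extends_dep_paths[OF Suc.prems(1,2)] by blast
    have "length ps \<le> 2 * k + 1" if "dep_path n \<pi> E ps" "last ps = i" for ps
    proof -
      have "length (ps @ [j, p]) \<le> 2 * Suc k + 1"
        using Suc.prems(3) extend[OF that] by (simp del: length_append)
      then show ?thesis by simp
    qed
    then show False
      using Suc.IH i by blast
  qed
qed

lemma remaining_empty_if_mis_removed:
  assumes "\<forall>v \<in> mis. v \<notin> remaining n \<pi> E V k"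
  shows "remaining n \<pi> E V k = {}"
proof -
  have "\<pi> q \<notin> remaining n \<pi> E V k" if q: "q \<in> {1..n}" for q
  proof (cases "\<pi> q \<in> mis")
    case False
    then obtain i where "\<pi> i \<in> mis" "E (\<pi> i) (\<pi> q)"
      using obtain_inhib[OF q False] by blast
    then show ?thesis
      using assms remaining_removes_mis_neighbours by blast
  qed (use assms in blast)
  then show ?thesis
    using remaining_subset[of n \<pi> E V k] order_onto by blast
qed

end

theorem lemma2p1:
  fixes V :: "'a set" and E :: "'a \<Rightarrow> 'a \<Rightarrow> bool" and n l :: nat and \<pi> :: "nat \<Rightarrow> 'a"
  assumes "simple_graph V E"
    and "card V = n"
    and "bij_betw \<pi> {1..n} V"
    and "\<exists>ps. dep_path n \<pi> E ps \<and> length ps = 2 * l + 1"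
    and "\<forall>ps. dep_path n \<pi> E ps \<longrightarrow> length ps \<le> 2 * l + 1"
  shows "remaining n \<pi> E V (l + 1) = {}"
proof -
  interpret graph_vertex_order n \<pi> E V
    using assms(1,3) by unfold_locales (auto simp: simple_graph_def bij_betw_def)
  have "\<pi> p \<notin> remaining n \<pi> E V (Suc l)" if "p \<in> {1..n}" "\<pi> p \<in> mis" for p
    using mis_vertex_removed_within_dep_length[OF that] assms(5) by blast
  then show ?thesis
    using remaining_empty_if_mis_removed greedy_mis_subset by fastforce
qed

end
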